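(* Let $F$ be an infinite field, let $G=\mathrm{GL}_{n_1}\times\dots\times\mathrm{GL}_{n_k}$, embedded in the standard way in $M=\mathrm M_{n_1}\times\dots\times\mathrm M_{n_k}$, and let $A,B\subset G$ be $F$-subgroups whose Zariski closures in $M$ are affine (linear) subspaces. Then: (1) for any $x,y\in G(F)$, if the variety $\{(a,b)\in A\times B: axb=y\}$ has a point over an algebraic closure $\overline F$, then it has an $F$-rational point; (2) if $(G,A)$ is a spherical pair (of algebraic groups), then it is an $F$-spherical pair, i.e. $P(F)\backslash G(F)/A(F)$ is finite for every parabolic subgroup $P\subset G$.
   Context: $\mathrm M_n$ denotes the affine space of $n\times n$ matrices. A pair $(G,A)$ of algebraic groups is spherical if a Borel subgroup of $G$ has an open orbit on $G/A$ (over $\overline F$), equivalently there are finitely many orbits of each parabolic on $G/A$ over $\overline F$. *)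

theory Defs
  imports "Jordan_Normal_Form.Matrix" "HOL-Computational_Algebra.Polynomial"
begin

definition Mset :: "nat list \<Rightarrow> 'a::field mat list set" where
  "Mset ns = {xs. length xs = length ns \<and> (\<forall>i<length ns. xs ! i \<in> carrier_mat (ns ! i) (ns ! i))}"

definition Gset :: "nat list \<Rightarrow> 'a::field mat list set" where
  "Gset ns = {xs \<in> Mset ns. \<forall>i<length ns. invertible_mat (xs ! i)}"

definition mmul :: "'a::field mat list \<Rightarrow> 'a mat list \<Rightarrow> 'a mat list" where
  "mmul xs ys = map2 (*) xs ys"

definition mone :: "nat list \<Rightarrow> 'a::field mat list" where
  "mone ns = map (\<lambda>n. 1\<^sub>m n) ns"

definition lin_pair :: "nat list \<Rightarrow> 'a::field mat list \<Rightarrow> 'a mat list \<Rightarrow> 'a" where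
  "lin_pair ns l x = (\<Sum>i<length ns. \<Sum>r<ns ! i. \<Sum>c<ns ! i. (l ! i) $$ (r, c) * (x ! i) $$ (r, c))"

text \<open>A family of affine-linear equations on M with coefficients in F.\<close>
definition lin_eqns :: "nat list \<Rightarrow> ('a::field mat list \<times> 'a) set \<Rightarrow> bool" where
  "lin_eqns ns E \<longleftrightarrow> (\<forall>(l, c) \<in> E. l \<in> Mset ns)"

text \<open>K-points (K an extension via phi) of the affine subspace of M cut out by the F-equations E.\<close>
definition affine_locus :: "('a::field \<Rightarrow> 'b::field) \<Rightarrow> nat list \<Rightarrow> ('a mat list \<times> 'a) set \<Rightarrow> 'b mat list set" where
  "affine_locus \<phi> ns E = {x \<in> Mset ns. \<forall>(l, c) \<in> E. lin_pair ns (map (map_mat \<phi>) l) x = \<phi> c}"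

definition subgrp_pts :: "('a::field \<Rightarrow> 'b::field) \<Rightarrow> nat list \<Rightarrow> ('a mat list \<times> 'a) set \<Rightarrow> 'b mat list set" where
  "subgrp_pts \<phi> ns E = affine_locus \<phi> ns E \<inter> Gset ns"

definition is_subgroup :: "nat list \<Rightarrow> 'a::field mat list set \<Rightarrow> bool" where
  "is_subgroup ns H \<longleftrightarrow> H \<subseteq> Gset ns \<and> mone ns \<in> H \<and> (\<forall>x\<in>H. \<forall>y\<in>H. mmul x y \<in> H)
     \<and> (\<forall>x\<in>H. \<exists>y\<in>H. mmul x y = mone ns)"

definition is_subspace :: "nat \<Rightarrow> 'a::field vec set \<Rightarrow> bool" where
  "is_subspace n S \<longleftrightarrow> S \<subseteq> carrier_vec n \<and> 0\<^sub>v n \<in> S \<and> (\<forall>u\<in>S. \<forall>v\<in>S. u + v \<in> S)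
     \<and> (\<forall>c. \<forall>v\<in>S. c \<cdot>\<^sub>v v \<in> S)"

text \<open>Points of a parabolic subgroup of G over the field: stabilizer in G of a flag in each factor.\<close>
definition parabolic :: "nat list \<Rightarrow> 'a::field mat list set \<Rightarrow> bool" where
  "parabolic ns P \<longleftrightarrow> (\<exists>Fl :: nat \<Rightarrow> 'a vec set set.
     (\<forall>i<length ns. (\<forall>S\<in>Fl i. is_subspace (ns ! i) S) \<and> (\<forall>S\<in>Fl i. \<forall>T\<in>Fl i. S \<subseteq> T \<or> T \<subseteq> S))
     \<and> P = {g \<in> Gset ns. \<forall>i<length ns. \<forall>S\<in>Fl i. \<forall>v\<in>S. (g ! i) *\<^sub>v v \<in> S})"

definition double_cosets :: "nat list \<Rightarrow> 'a::field mat list set \<Rightarrow> 'a mat list set \<Rightarrow> 'a mat list set set" where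
  "double_cosets ns P H = (\<lambda>g. {mmul (mmul p g) h | p h. p \<in> P \<and> h \<in> H}) ` Gset ns"

definition spherical_fin :: "nat list \<Rightarrow> 'a::field mat list set \<Rightarrow> bool" where
  "spherical_fin ns H \<longleftrightarrow> (\<forall>P. parabolic ns P \<longrightarrow> finite (double_cosets ns P H))"

definition is_alg_closure :: "('a::field \<Rightarrow> 'b::field) \<Rightarrow> bool" where
  "is_alg_closure \<phi> \<longleftrightarrow> \<phi> 0 = 0 \<and> \<phi> 1 = 1 \<and> (\<forall>x y. \<phi> (x + y) = \<phi> x + \<phi> y) \<and> (\<forall>x y. \<phi> (x * y) = \<phi> x * \<phi> y)
     \<and> (\<forall>p :: 'b poly. degree p > 0 \<longrightarrow> (\<exists>z. poly p z = 0))
     \<and> (\<forall>z :: 'b. \<exists>p :: 'a poly. p \<noteq> 0 \<and> poly (map_poly \<phi> p) z = 0)"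

end

theory Submission
  imports Defs "Jordan_Normal_Form.Determinant"
begin

(* Of the algebraic-closure hypothesis only the fact that
   phi : F -> K is a field embedding is used.

   The argument is a specialization.  Finitely many elements of K lie in an F-subspace with
   basis 1, e_1, ..., e_m.  Writing elements in these F-coordinates and replacing e_j by some
   r_j in F defines an F-linear map sigma with sigma(1) = 1, and every relation that is
   F-linear in the unknowns survives sigma: affine equations with F-coefficients, identities
   P X = Y Q with X, Y over F, and "p maps the K-span of an F-subspace S into itself" (which
   becomes "sigma(p) maps S into itself").  As F is infinite, the r_j can be chosen one at a
   time so that finitely many determinants, polynomials in r_j, stay nonzero.

   Part (1) applies
   it with p in A(K).  Part (2) applies it to p in the stabilizer of the K-span of an F-flag:
   F-points in one P(K) \ G(K) / A(K) double coset lie in one P(F) \ G(F) / A(F) double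
   coset, so the F-double cosets are at most as many as the K-double cosets. *)

definition fcomb :: "('a::field \<Rightarrow> 'b::field) \<Rightarrow> 'b list \<Rightarrow> (nat \<Rightarrow> 'a) \<Rightarrow> 'b" where
  "fcomb h es \<alpha> = h (\<alpha> 0) + (\<Sum>j<length es. es!j * h (\<alpha> (Suc j)))"

definition findep :: "('a::field \<Rightarrow> 'b::field) \<Rightarrow> 'b list \<Rightarrow> bool" where
  "findep h es \<longleftrightarrow> (\<forall>\<alpha>. fcomb h es \<alpha> = 0 \<longrightarrow> (\<forall>j\<le>length es. \<alpha> j = 0))"

definition fspan :: "('a::field \<Rightarrow> 'b::field) \<Rightarrow> 'b list \<Rightarrow> 'b \<Rightarrow> bool" where
  "fspan h es s \<longleftrightarrow> (\<exists>\<alpha>. s = fcomb h es \<alpha>)"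

definition fcoord :: "('a::field \<Rightarrow> 'b::field) \<Rightarrow> 'b list \<Rightarrow> 'b \<Rightarrow> nat \<Rightarrow> 'a" where
  "fcoord h es s = (SOME \<alpha>. s = fcomb h es \<alpha>)"

lemma fcomb_fcoord: "fspan h es s \<Longrightarrow> fcomb h es (fcoord h es s) = s"
  unfolding fspan_def fcoord_def by (metis (mono_tags) someI_ex)

lemma fcomb_cong: "(\<And>k. k \<le> length es \<Longrightarrow> \<alpha> k = \<beta> k) \<Longrightarrow> fcomb h es \<alpha> = fcomb h es \<beta>"
  unfolding fcomb_def by (auto intro!: sum.cong)

lemma fcomb_id_sum: "fcomb id rs \<alpha> = (\<Sum>k\<le>length rs. (if k = 0 then 1 else rs!(k-1)) * \<alpha> k)"
  unfolding fcomb_def by (simp add: sum.atMost_shift)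

definition fspec :: "('a::field \<Rightarrow> 'b::field) \<Rightarrow> 'b list \<Rightarrow> 'a list \<Rightarrow> 'b \<Rightarrow> 'a" where
  "fspec h es rs = (\<lambda>s. fcomb id rs (fcoord h es s))"

lemma field_hom_id: "field_hom (id :: 'a::field \<Rightarrow> 'a)"
  by unfold_locales auto

context field_hom begin

lemma fcomb_diff: "fcomb hom es \<alpha> - fcomb hom es \<beta> = fcomb hom es (\<lambda>k. \<alpha> k - \<beta> k)"
  unfolding fcomb_def by (simp add: hom_distribs right_diff_distrib sum_subtractf algebra_simps)

lemma fcomb_scale: "hom c * fcomb hom es \<alpha> = fcomb hom es (\<lambda>k. c * \<alpha> k)"
  unfolding fcomb_def by (simp add: hom_mult distrib_left sum_distrib_left algebra_simps)

lemma fcomb_sum: "(\<Sum>i\<in>I. fcomb hom es (\<alpha> i)) = fcomb hom es (\<lambda>k. \<Sum>i\<in>I. \<alpha> i k)"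
  unfolding fcomb_def by (simp add: hom_sum sum.distrib sum_distrib_left sum.swap[of _ I])

lemma fcomb_const: "fcomb hom es (\<lambda>k. if k = 0 then c else 0) = hom c"
  unfolding fcomb_def by simp

lemma fcomb_map: "fcomb hom (map hom rs) \<alpha> = hom (fcomb id rs \<alpha>)"
  unfolding fcomb_def by (simp add: hom_distribs)

lemma fcomb_update:
  assumes "k < length es"
  shows "fcomb hom (es[k:=z]) \<alpha> = fcomb hom (es[k:=0]) \<alpha> + z * hom (\<alpha> (Suc k))"
proof -
  have "(\<Sum>j<length es. es[k:=z]!j * hom (\<alpha> (Suc j)))
     = (\<Sum>j<length es. es[k:=0]!j * hom (\<alpha> (Suc j)) + (if j = k then z * hom (\<alpha> (Suc k)) else 0))"
    using assms by (intro sum.cong) (auto simp: nth_list_update)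
  also have "\<dots> = (\<Sum>j<length es. es[k:=0]!j * hom (\<alpha> (Suc j))) + z * hom (\<alpha> (Suc k))"
    using assms by (simp add: sum.distrib)
  finally show ?thesis unfolding fcomb_def by simp
qed

lemma fcomb_snoc: "fcomb hom (es @ [t]) \<alpha> = fcomb hom es \<alpha> + t * hom (\<alpha> (Suc (length es)))"
  unfolding fcomb_def by (simp add: nth_append)

lemma fcomb_pad: "fcomb hom (es @ fs) (\<lambda>k. if k \<le> length es then \<alpha> k else 0) = fcomb hom es \<alpha>"
proof -
  have "(\<Sum>j<length (es @ fs). (es @ fs) ! j * hom (if Suc j \<le> length es then \<alpha> (Suc j) else 0))
     = (\<Sum>j<length es. es ! j * hom (\<alpha> (Suc j)))"
    by (rule sum.mono_neutral_cong_right) (auto simp: nth_append)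
  thus ?thesis unfolding fcomb_def by simp
qed

lemma fspan_append: "fspan hom es s \<Longrightarrow> fspan hom (es @ fs) s"
  unfolding fspan_def using fcomb_pad by metis

lemma findep_Nil: "findep hom []"
  unfolding findep_def fcomb_def by simp

lemma findep_snoc:
  assumes "findep hom es" "\<not> fspan hom es t"
  shows "findep hom (es @ [t])"
  unfolding findep_def
proof (rule allI, rule impI)
  fix \<alpha> assume z: "fcomb hom (es @ [t]) \<alpha> = 0"
  let ?m = "length es"
  have top: "\<alpha> (Suc ?m) = 0"
  proof (rule ccontr)
    assume ne: "\<alpha> (Suc ?m) \<noteq> 0"
    from z have "fcomb hom es \<alpha> + t * hom (\<alpha> (Suc ?m)) = 0" by (simp add: fcomb_snoc)
    hence "t * hom (\<alpha> (Suc ?m)) = - fcomb hom es \<alpha>" by (simp add: eq_neg_iff_add_eq_0 add.commute)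
    hence "t = - fcomb hom es \<alpha> / hom (\<alpha> (Suc ?m))"
      using ne by (metis hom_0_iff nonzero_mult_div_cancel_right)
    also have "\<dots> = hom (- 1 / \<alpha> (Suc ?m)) * fcomb hom es \<alpha>" by (simp add: hom_distribs)
    also have "\<dots> = fcomb hom es (\<lambda>k. (- 1 / \<alpha> (Suc ?m)) * \<alpha> k)" by (rule fcomb_scale)
    finally show False using assms(2) unfolding fspan_def by blast
  qed
  with z have "fcomb hom es \<alpha> = 0" by (simp add: fcomb_snoc)
  with assms(1) have "\<forall>j\<le>?m. \<alpha> j = 0" unfolding findep_def by blast
  with top show "\<forall>j\<le>length (es @ [t]). \<alpha> j = 0" by (auto simp: le_Suc_eq)
qed

lemma findep_extend:
  assumes "finite T" "findep hom es"
  shows "\<exists>fs. findep hom (es @ fs) \<and> (\<forall>s\<in>T. fspan hom (es @ fs) s)"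
  using assms(1)
proof (induction T rule: finite_induct)
  case empty thus ?case using assms(2) by (intro exI[of _ "[]"]) auto
next
  case (insert t T)
  then obtain fs where fs: "findep hom (es @ fs)" "\<forall>s\<in>T. fspan hom (es @ fs) s" by blast
  show ?case
  proof (cases "fspan hom (es @ fs) t")
    case True thus ?thesis using fs by (intro exI[of _ fs]) auto
  next
    case False
    let ?e = "\<lambda>k. if k = Suc (length es + length fs) then 1 else 0"
    have "fcomb hom (es @ fs @ [t]) ?e = t"
      using fcomb_snoc[of "es @ fs" t ?e] by (simp add: fcomb_def)
    hence "fspan hom (es @ fs @ [t]) t" unfolding fspan_def by metis
    moreover have "findep hom (es @ fs @ [t])" using findep_snoc[OF fs(1) False] by simp
    moreover have "\<forall>s\<in>T. fspan hom (es @ fs @ [t]) s"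
      using fs(2) fspan_append[of "es @ fs" _ "[t]"] by simp
    ultimately show ?thesis by (intro exI[of _ "fs @ [t]"]) auto
  qed
qed

lemma findep_unique:
  assumes "findep hom es" "fcomb hom es \<alpha> = fcomb hom es \<beta>" "j \<le> length es"
  shows "\<alpha> j = \<beta> j"
proof -
  have "fcomb hom es (\<lambda>k. \<alpha> k - \<beta> k) = 0" using assms(2) fcomb_diff by (metis right_minus_eq)
  with assms(1,3) show ?thesis unfolding findep_def by force
qed

end

lemma map_mat_id_fun: "map_mat id = id"
  by (rule ext, rule eq_matI) auto

lemma map_vec_id_eq: "map_vec id v = v"
  by (rule eq_vecI) auto

lemma map_mat_comp: "map_mat f (map_mat g A) = map_mat (f \<circ> g) A"
  by (rule eq_matI) auto

lemma Mset_nth: "x \<in> Mset ns \<Longrightarrow> i < length ns \<Longrightarrow> x!i \<in> carrier_mat (ns!i) (ns!i)"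
  unfolding Mset_def by auto

lemma Mset_length: "x \<in> Mset ns \<Longrightarrow> length x = length ns"
  unfolding Mset_def by auto

lemma Mset_dim:
  "x \<in> Mset ns \<Longrightarrow> i < length ns \<Longrightarrow> dim_row (x!i) = ns!i \<and> dim_col (x!i) = ns!i"
  unfolding Mset_def by auto

lemma MsetI:
  "length x = length ns \<Longrightarrow> (\<And>i. i < length ns \<Longrightarrow> x!i \<in> carrier_mat (ns!i) (ns!i)) \<Longrightarrow> x \<in> Mset ns"
  unfolding Mset_def by auto

lemma fcomb_fcoord_mat:
  assumes "\<forall>s\<in>elements_mat M. fspan h es s"
  shows "map_mat (\<lambda>s. fcomb h es (fcoord h es s)) M = M"
proof (rule eq_matI)
  fix i j assume "i < dim_row M" "j < dim_col M"
  hence "M $$ (i,j) \<in> elements_mat M" by (intro elements_matI[of M "dim_row M" "dim_col M"]) auto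
  thus "map_mat (\<lambda>s. fcomb h es (fcoord h es s)) M $$ (i,j) = M $$ (i,j)"
    using assms \<open>i < dim_row M\<close> \<open>j < dim_col M\<close> by (simp add: fcomb_fcoord)
qed auto

context field_hom begin

lemma lin_pair_fcomb:
  assumes l: "l \<in> Mset ns" and x: "x \<in> Mset ns"
  shows "lin_pair ns (map (map_mat hom) l) (map (map_mat (\<lambda>s. fcomb hom es (\<beta> s))) x)
     = fcomb hom es (\<lambda>k. lin_pair ns l (map (map_mat (\<lambda>s. \<beta> s k)) x))"
proof -
  have "lin_pair ns (map (map_mat hom) l) (map (map_mat (\<lambda>s. fcomb hom es (\<beta> s))) x)
    = (\<Sum>i<length ns. \<Sum>r<ns!i. \<Sum>c<ns!i. fcomb hom es (\<lambda>k. l!i $$ (r,c) * \<beta> (x!i $$ (r,c)) k))"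
    unfolding lin_pair_def
  proof (intro sum.cong refl)
    fix i r c assume i: "i \<in> {..<length ns}" and r: "r \<in> {..<ns!i}" and c: "c \<in> {..<ns!i}"
    have "l!i \<in> carrier_mat (ns!i) (ns!i)" "x!i \<in> carrier_mat (ns!i) (ns!i)"
      using Mset_nth[OF l] Mset_nth[OF x] i by auto
    then show "map (map_mat hom) l ! i $$ (r, c) * map (map_mat (\<lambda>s. fcomb hom es (\<beta> s))) x ! i $$ (r, c)
        = fcomb hom es (\<lambda>k. l!i $$ (r,c) * \<beta> (x!i $$ (r,c)) k)"
      using Mset_length[OF l] Mset_length[OF x] i r c by (simp add: fcomb_scale)
  qed
  also have "\<dots> = fcomb hom es (\<lambda>k. \<Sum>i<length ns. \<Sum>r<ns!i. \<Sum>c<ns!i. l!i $$ (r,c) * \<beta> (x!i $$ (r,c)) k)"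
    by (simp add: fcomb_sum)
  also have "\<dots> = fcomb hom es (\<lambda>k. lin_pair ns l (map (map_mat (\<lambda>s. \<beta> s k)) x))"
    unfolding lin_pair_def
    by (intro arg_cong[where f = "fcomb hom es"] ext sum.cong refl) (auto simp: Mset_length[OF x] Mset_dim[OF x])
  finally show ?thesis .
qed

lemma mult_right_fcomb:
  assumes "P \<in> carrier_mat n n" "X \<in> carrier_mat n n" "r < n" "c < n"
  shows "(map_mat (\<lambda>s. fcomb hom es (\<beta> s)) P * map_mat hom X) $$ (r,c)
     = fcomb hom es (\<lambda>k. (map_mat (\<lambda>s. \<beta> s k) P * X) $$ (r,c))"
proof -
  have "(map_mat (\<lambda>s. fcomb hom es (\<beta> s)) P * map_mat hom X) $$ (r,c)
      = (\<Sum>j<n. fcomb hom es (\<lambda>k. X $$ (j,c) * \<beta> (P $$ (r,j)) k))"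
    using assms by (auto simp: scalar_prod_def lessThan_atLeast0 fcomb_scale[symmetric] intro!: sum.cong)
  also have "\<dots> = fcomb hom es (\<lambda>k. \<Sum>j<n. X $$ (j,c) * \<beta> (P $$ (r,j)) k)" by (simp add: fcomb_sum)
  also have "\<dots> = fcomb hom es (\<lambda>k. (map_mat (\<lambda>s. \<beta> s k) P * X) $$ (r,c))"
    using assms by (auto simp: scalar_prod_def lessThan_atLeast0 mult.commute
        intro!: sum.cong arg_cong[where f = "fcomb hom es"])
  finally show ?thesis .
qed

lemma mult_left_fcomb:
  assumes "Q \<in> carrier_mat n n" "Y \<in> carrier_mat n n" "r < n" "c < n"
  shows "(map_mat hom Y * map_mat (\<lambda>s. fcomb hom es (\<beta> s)) Q) $$ (r,c)
     = fcomb hom es (\<lambda>k. (Y * map_mat (\<lambda>s. \<beta> s k) Q) $$ (r,c))"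
proof -
  have "(map_mat hom Y * map_mat (\<lambda>s. fcomb hom es (\<beta> s)) Q) $$ (r,c)
      = (\<Sum>j<n. fcomb hom es (\<lambda>k. Y $$ (r,j) * \<beta> (Q $$ (j,c)) k))"
    using assms by (auto simp: scalar_prod_def lessThan_atLeast0 fcomb_scale[symmetric] intro!: sum.cong)
  also have "\<dots> = fcomb hom es (\<lambda>k. \<Sum>j<n. Y $$ (r,j) * \<beta> (Q $$ (j,c)) k)" by (simp add: fcomb_sum)
  also have "\<dots> = fcomb hom es (\<lambda>k. (Y * map_mat (\<lambda>s. \<beta> s k) Q) $$ (r,c))"
    using assms by (auto simp: scalar_prod_def lessThan_atLeast0
        intro!: sum.cong arg_cong[where f = "fcomb hom es"])
  finally show ?thesis .
qed

lemma mult_vec_fcomb: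
  assumes "P \<in> carrier_mat n n" "v \<in> carrier_vec n" "r < n"
  shows "(map_mat (\<lambda>s. fcomb hom es (\<beta> s)) P *\<^sub>v map_vec hom v) $ r
     = fcomb hom es (\<lambda>k. (map_mat (\<lambda>s. \<beta> s k) P *\<^sub>v v) $ r)"
proof -
  have "(map_mat (\<lambda>s. fcomb hom es (\<beta> s)) P *\<^sub>v map_vec hom v) $ r
      = (\<Sum>j<n. fcomb hom es (\<lambda>k. v $ j * \<beta> (P $$ (r,j)) k))"
    using assms by (auto simp: scalar_prod_def lessThan_atLeast0 fcomb_scale[symmetric] intro!: sum.cong)
  also have "\<dots> = fcomb hom es (\<lambda>k. \<Sum>j<n. v $ j * \<beta> (P $$ (r,j)) k)" by (simp add: fcomb_sum)
  also have "\<dots> = fcomb hom es (\<lambda>k. (map_mat (\<lambda>s. \<beta> s k) P *\<^sub>v v) $ r)"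
    using assms by (auto simp: scalar_prod_def lessThan_atLeast0 mult.commute
        intro!: sum.cong arg_cong[where f = "fcomb hom es"])
  finally show ?thesis .
qed

end

definition Kspan :: "('a::field \<Rightarrow> 'b::field) \<Rightarrow> nat \<Rightarrow> 'a vec set \<Rightarrow> 'b vec set" where
  "Kspan h n S = {v \<in> carrier_vec n. \<exists>ks ts. length ks = length ts \<and> set ts \<subseteq> S
     \<and> (\<forall>r<n. v $ r = (\<Sum>l<length ts. ks!l * h (ts!l $ r)))}"

lemma sum_lessThan_add:
  "(\<Sum>l<m + (k::nat). g l) = (\<Sum>l<m. g l) + (\<Sum>l<k. (g (m + l) :: 'c::comm_monoid_add))"
  by (induction k) (auto simp: add.assoc)

context field_hom begin

lemma Kspan_subspace: "is_subspace n (Kspan hom n S)"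
  unfolding is_subspace_def
proof (intro conjI ballI allI)
  show "Kspan hom n S \<subseteq> carrier_vec n" unfolding Kspan_def by auto
  show "0\<^sub>v n \<in> Kspan hom n S" unfolding Kspan_def by (auto intro!: exI[of _ "[]"])
next
  fix u v assume u: "u \<in> Kspan hom n S" and v: "v \<in> Kspan hom n S"
  obtain ks1 ts1 where 1: "u \<in> carrier_vec n" "length ks1 = length ts1" "set ts1 \<subseteq> S"
    "\<forall>r<n. u $ r = (\<Sum>l<length ts1. ks1!l * hom (ts1!l $ r))" using u unfolding Kspan_def by blast
  obtain ks2 ts2 where 2: "v \<in> carrier_vec n" "length ks2 = length ts2" "set ts2 \<subseteq> S"
    "\<forall>r<n. v $ r = (\<Sum>l<length ts2. ks2!l * hom (ts2!l $ r))" using v unfolding Kspan_def by blast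
  have "\<forall>r<n. (u + v) $ r = (\<Sum>l<length (ts1 @ ts2). (ks1 @ ks2)!l * hom ((ts1 @ ts2)!l $ r))"
    using 1 2 by (simp add: sum_lessThan_add nth_append)
  thus "u + v \<in> Kspan hom n S" unfolding Kspan_def using 1 2
    by (intro CollectI conjI exI[of _ "ks1 @ ks2"] exI[of _ "ts1 @ ts2"]) auto
next
  fix c v assume v: "v \<in> Kspan hom n S"
  obtain ks ts where 1: "v \<in> carrier_vec n" "length ks = length ts" "set ts \<subseteq> S"
    "\<forall>r<n. v $ r = (\<Sum>l<length ts. ks!l * hom (ts!l $ r))" using v unfolding Kspan_def by blast
  have "\<forall>r<n. (c \<cdot>\<^sub>v v) $ r = (\<Sum>l<length ts. (map ((*) c) ks)!l * hom (ts!l $ r))"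
    using 1 by (simp add: sum_distrib_left mult.assoc)
  thus "c \<cdot>\<^sub>v v \<in> Kspan hom n S" unfolding Kspan_def using 1
    by (intro CollectI conjI exI[of _ "map ((*) c) ks"] exI[of _ ts]) auto
qed

lemma Kspan_mono: "S \<subseteq> T \<Longrightarrow> Kspan hom n S \<subseteq> Kspan hom n T"
  unfolding Kspan_def by blast

lemma map_vec_in_Kspan: "v \<in> S \<Longrightarrow> v \<in> carrier_vec n \<Longrightarrow> map_vec hom v \<in> Kspan hom n S"
  unfolding Kspan_def by (intro CollectI conjI exI[of _ "[1]"] exI[of _ "[v]"]) auto

end

lemma subspace_sum_in:
  assumes S: "is_subspace n S" and I: "finite I" and w: "\<forall>k\<in>I. w k \<in> S"
  shows "vec n (\<lambda>r. \<Sum>k\<in>I. c k * w k $ r) \<in> S"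
  using I w
proof (induction I rule: finite_induct)
  case empty
  have "vec n (\<lambda>r. \<Sum>k\<in>{}. c k * w k $ r) = 0\<^sub>v n" by (rule eq_vecI) auto
  thus ?case using S unfolding is_subspace_def by simp
next
  case (insert a I)
  have wa: "w a \<in> carrier_vec n" using insert S unfolding is_subspace_def by auto
  have "vec n (\<lambda>r. \<Sum>k\<in>insert a I. c k * w k $ r) = c a \<cdot>\<^sub>v w a + vec n (\<lambda>r. \<Sum>k\<in>I. c k * w k $ r)"
    using insert wa by (intro eq_vecI) auto
  moreover have "c a \<cdot>\<^sub>v w a \<in> S" using insert S unfolding is_subspace_def by auto
  moreover have "vec n (\<lambda>r. \<Sum>k\<in>I. c k * w k $ r) \<in> S" using insert by auto
  ultimately show ?case using S unfolding is_subspace_def by auto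
qed

(* Specialization preserving nonvanishing of finitely many determinants.  Evaluation of
   polynomials at z is a ring homomorphism, hence commutes with determinants. *)

lemma poly_comm_ring_hom: "comm_ring_hom (\<lambda>p. poly p (z::'a::field))"
  by unfold_locales auto

context field_hom begin

(* One basis element t!k can be replaced by an element of F: the determinants are polynomials
   in t!k, not all zero, and F is infinite. *)
lemma specialize_det_step:
  assumes inf: "infinite (UNIV::'a set)" and I: "finite I" and k: "k < length t"
    and nz: "\<forall>i\<in>I. det (map_mat (\<lambda>s. fcomb hom t (\<beta> s)) (P i)) \<noteq> 0"
  shows "\<exists>z\<in>range hom. \<forall>i\<in>I. det (map_mat (\<lambda>s. fcomb hom (t[k:=z]) (\<beta> s)) (P i)) \<noteq> 0"
proof -
  define Mp where "Mp i = map_mat (\<lambda>s. [: fcomb hom (t[k:=0]) (\<beta> s), hom (\<beta> s (Suc k)) :]) (P i)" for i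
  define Q where "Q = (\<Prod>i\<in>I. det (Mp i))"
  have eval: "poly (det (Mp i)) z = det (map_mat (\<lambda>s. fcomb hom (t[k:=z]) (\<beta> s)) (P i))" for i z
  proof -
    interpret ev: comm_ring_hom "\<lambda>q. poly q z" by (rule poly_comm_ring_hom)
    have "poly (det (Mp i)) z = det (map_mat (\<lambda>q. poly q z) (Mp i))" by simp
    also have "map_mat (\<lambda>q. poly q z) (Mp i) = map_mat (\<lambda>s. fcomb hom (t[k:=z]) (\<beta> s)) (P i)"
      unfolding Mp_def using fcomb_update[OF k, of z] by (intro eq_matI) (auto simp: algebra_simps)
    finally show ?thesis .
  qed
  have "poly Q (t!k) \<noteq> 0" unfolding Q_def poly_prod eval using nz I by simp
  hence "Q \<noteq> 0" by auto
  hence "finite {z. poly Q z = 0}" by (rule poly_roots_finite)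
  moreover have "infinite (range hom)"
  proof
    assume "finite (range hom)"
    hence "finite (UNIV :: 'a set)" using finite_imageD inj_f by blast
    thus False using inf by simp
  qed
  ultimately have "infinite (range hom - {z. poly Q z = 0})" using Diff_infinite_finite by blast
  then obtain z where "z \<in> range hom - {z. poly Q z = 0}" by (metis ex_in_conv finite.emptyI)
  hence z: "z \<in> range hom" "poly Q z \<noteq> 0" by auto
  have "\<forall>i\<in>I. det (map_mat (\<lambda>s. fcomb hom (t[k:=z]) (\<beta> s)) (P i)) \<noteq> 0"
    using z(2) I unfolding Q_def poly_prod eval by simp
  with z(1) show ?thesis by blast
qed

lemma specialize_det:
  assumes inf: "infinite (UNIV::'a set)" and I: "finite I"
    and spn: "\<forall>i\<in>I. \<forall>s\<in>elements_mat (P i). fspan hom es s"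
    and d: "\<forall>i\<in>I. det (P i) \<noteq> 0"
  shows "\<exists>rs. length rs = length es \<and> (\<forall>i\<in>I. det (map_mat (fspec hom es rs) (P i)) \<noteq> 0)"
proof -
  define D where "D t i = det (map_mat (\<lambda>s. fcomb hom t (fcoord hom es s)) (P i))" for t i
  (* Replace es!0, ..., es!(k-1) by images of elements of F, one at a time. *)
  have "\<exists>t. length t = length es \<and> (\<forall>j<k. t!j \<in> range hom)
      \<and> (\<forall>j. k \<le> j \<and> j < length es \<longrightarrow> t!j = es!j) \<and> (\<forall>i\<in>I. D t i \<noteq> 0)"
    if "k \<le> length es" for k
    using that
  proof (induction k)
    case 0
    have "\<forall>i\<in>I. D es i \<noteq> 0" unfolding D_def using spn d by (simp add: fcomb_fcoord_mat)
    thus ?case by (intro exI[of _ es]) auto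
  next
    case (Suc k)
    then obtain t where t: "length t = length es" "\<forall>j<k. t!j \<in> range hom"
      "\<forall>j. k \<le> j \<and> j < length es \<longrightarrow> t!j = es!j" "\<forall>i\<in>I. D t i \<noteq> 0" by auto
    have k: "k < length t" using Suc t(1) by auto
    obtain z where z: "z \<in> range hom" "\<forall>i\<in>I. D (t[k:=z]) i \<noteq> 0"
      using specialize_det_step[OF inf I k] t(4) unfolding D_def by blast
    have "\<forall>j<Suc k. t[k:=z]!j \<in> range hom"
      using t(2) z(1) k by (auto simp: nth_list_update less_Suc_eq)
    moreover have "\<forall>j. Suc k \<le> j \<and> j < length es \<longrightarrow> t[k:=z]!j = es!j" using t(3) by auto
    ultimately show ?case using t(1) z(2) by (intro exI[of _ "t[k:=z]"]) auto
  qed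
  from this[of "length es"] obtain t where
    t: "length t = length es" "\<forall>j<length es. t!j \<in> range hom" "\<forall>i\<in>I. D t i \<noteq> 0"
    by auto
  define rs where "rs = map (inv_into UNIV hom) t"
  have t_rs: "t = map hom rs" unfolding rs_def using t(1,2)
    by (intro nth_equalityI) (auto simp: f_inv_into_f)
  have "D t i = hom (det (map_mat (fspec hom es rs) (P i)))" for i
  proof -
    have "D t i = det (map_mat hom (map_mat (fspec hom es rs) (P i)))"
      unfolding D_def t_rs fspec_def by (simp add: fcomb_map map_mat_comp o_def)
    thus ?thesis by simp
  qed
  hence "\<forall>i\<in>I. det (map_mat (fspec hom es rs) (P i)) \<noteq> 0" using t(3) by simp
  moreover have "length rs = length es" using t(1) unfolding rs_def by simp
  ultimately show ?thesis by blast
qed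

end

(* In each case the relation, written in the
   F-coordinates with respect to the independent family 1, es, holds coordinatewise, and
   hence after any specialization es \<mapsto> rs. *)

context field_hom begin

lemma specialize_lin_pair:
  assumes es: "findep hom es" and x: "x \<in> Mset ns"
    and spn: "\<forall>i<length ns. \<forall>s\<in>elements_mat (x!i). fspan hom es s"
    and l: "l \<in> Mset ns" and e: "lin_pair ns (map (map_mat hom) l) x = hom c"
    and rs: "length rs = length es"
  shows "lin_pair ns l (map (map_mat (fspec hom es rs)) x) = c"
proof -
  interpret idh: field_hom id by (rule field_hom_id)
  define \<Lambda> where "\<Lambda> k = lin_pair ns l (map (map_mat (\<lambda>s. fcoord hom es s k)) x)" for k
  have "x = map (map_mat (\<lambda>s. fcomb hom es (fcoord hom es s))) x"
    using x spn by (intro nth_equalityI) (auto simp: Mset_length fcomb_fcoord_mat)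
  hence "fcomb hom es \<Lambda> = hom c"
    using e lin_pair_fcomb[OF l x, of es "fcoord hom es"] unfolding \<Lambda>_def by simp
  also have "\<dots> = fcomb hom es (\<lambda>k. if k = 0 then c else 0)" by (simp add: fcomb_const)
  finally have coord: "\<And>k. k \<le> length es \<Longrightarrow> \<Lambda> k = (if k = 0 then c else 0)"
    using findep_unique[OF es] by blast
  have "lin_pair ns l (map (map_mat (fspec hom es rs)) x)
     = lin_pair ns (map (map_mat id) l) (map (map_mat (\<lambda>s. fcomb id rs (fcoord hom es s))) x)"
    by (simp add: fspec_def map_mat_id_fun)
  also have "\<dots> = fcomb id rs \<Lambda>" unfolding \<Lambda>_def by (rule idh.lin_pair_fcomb[OF l x])
  also have "\<dots> = fcomb id rs (\<lambda>k. if k = 0 then c else 0)" using coord rs by (intro fcomb_cong) auto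
  also have "\<dots> = c" by (simp add: idh.fcomb_const)
  finally show ?thesis .
qed

lemma specialize_mult:
  assumes es: "findep hom es" and P: "P \<in> carrier_mat n n" and Q: "Q \<in> carrier_mat n n"
    and X: "X \<in> carrier_mat n n" and Y: "Y \<in> carrier_mat n n"
    and spn: "\<forall>s\<in>elements_mat P \<union> elements_mat Q. fspan hom es s" and rs: "length rs = length es"
    and e: "P * map_mat hom X = map_mat hom Y * Q"
  shows "map_mat (fspec hom es rs) P * X = Y * map_mat (fspec hom es rs) Q"
  unfolding fspec_def
proof (rule eq_matI)
  interpret idh: field_hom id by (rule field_hom_id)
  fix r c assume "r < dim_row (Y * map_mat (\<lambda>s. fcomb id rs (fcoord hom es s)) Q)"
    and "c < dim_col (Y * map_mat (\<lambda>s. fcomb id rs (fcoord hom es s)) Q)"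
  hence r: "r < n" and c: "c < n" using Y Q by auto
  have P_eq: "P = map_mat (\<lambda>s. fcomb hom es (fcoord hom es s)) P"
    using spn by (simp add: fcomb_fcoord_mat)
  have Q_eq: "Q = map_mat (\<lambda>s. fcomb hom es (fcoord hom es s)) Q"
    using spn by (simp add: fcomb_fcoord_mat)
  have "fcomb hom es (\<lambda>k. (map_mat (\<lambda>s. fcoord hom es s k) P * X) $$ (r,c)) = (P * map_mat hom X) $$ (r,c)"
    using mult_right_fcomb[OF P X r c, of es "fcoord hom es"] P_eq by simp
  also have "\<dots> = (map_mat hom Y * Q) $$ (r,c)" using e by simp
  also have "\<dots> = fcomb hom es (\<lambda>k. (Y * map_mat (\<lambda>s. fcoord hom es s k) Q) $$ (r,c))"
    using mult_left_fcomb[OF Q Y r c, of es "fcoord hom es"] Q_eq by simp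
  finally have coord: "\<And>k. k \<le> length es \<Longrightarrow>
      (map_mat (\<lambda>s. fcoord hom es s k) P * X) $$ (r,c) = (Y * map_mat (\<lambda>s. fcoord hom es s k) Q) $$ (r,c)"
    using findep_unique[OF es] by blast
  have "(map_mat (\<lambda>s. fcomb id rs (fcoord hom es s)) P * X) $$ (r,c)
     = (map_mat (\<lambda>s. fcomb id rs (fcoord hom es s)) P * map_mat id X) $$ (r,c)"
    by (simp add: map_mat_id_fun)
  also have "\<dots> = fcomb id rs (\<lambda>k. (map_mat (\<lambda>s. fcoord hom es s k) P * X) $$ (r,c))"
    by (rule idh.mult_right_fcomb[OF P X r c])
  also have "\<dots> = fcomb id rs (\<lambda>k. (Y * map_mat (\<lambda>s. fcoord hom es s k) Q) $$ (r,c))"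
    using coord rs by (intro fcomb_cong) auto
  also have "\<dots> = (map_mat id Y * map_mat (\<lambda>s. fcomb id rs (fcoord hom es s)) Q) $$ (r,c)"
    by (rule idh.mult_left_fcomb[OF Q Y r c, symmetric])
  finally show "(map_mat (\<lambda>s. fcomb id rs (fcoord hom es s)) P * X) $$ (r,c)
      = (Y * map_mat (\<lambda>s. fcomb id rs (fcoord hom es s)) Q) $$ (r,c)"
    by (simp add: map_mat_id_fun)
qed (use P Q X Y in auto)

(* If P maps the image of every vector of S into the K-span of S, so does each coordinate
   matrix of P on S itself: the coordinates of an element of the K-span, in an independent
   family extending 1, es, are F-combinations of vectors of S. *)
lemma coord_mat_stab:
  assumes es: "findep hom es" and P: "P \<in> carrier_mat n n"
    and spn: "\<forall>s\<in>elements_mat P. fspan hom es s" and S: "is_subspace n S"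
    and st: "\<forall>v\<in>S. P *\<^sub>v map_vec hom v \<in> Kspan hom n S" and v: "v \<in> S"
    and k: "k \<le> length es"
  shows "map_mat (\<lambda>s. fcoord hom es s k) P *\<^sub>v v \<in> S"
proof -
  define U where "U k = map_mat (\<lambda>s. fcoord hom es s k) P" for k
  have vc: "v \<in> carrier_vec n" using S v unfolding is_subspace_def by auto
  have P_eq: "P = map_mat (\<lambda>s. fcomb hom es (fcoord hom es s)) P"
    using spn by (simp add: fcomb_fcoord_mat)
  let ?w = "P *\<^sub>v map_vec hom v"
  obtain ks ts where kt: "length ks = length ts" "set ts \<subseteq> S"
    "\<forall>r<n. ?w $ r = (\<Sum>l<length ts. ks!l * hom (ts!l $ r))"
    using st v unfolding Kspan_def by blast
  obtain fs where fs: "findep hom (es @ fs)" "\<forall>s\<in>set ks. fspan hom (es @ fs) s"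
    using findep_extend[OF _ es, of "set ks"] by auto
  define es' where "es' = es @ fs"
  have "U k *\<^sub>v v = vec n (\<lambda>r. \<Sum>l\<in>{..<length ts}. fcoord hom es' (ks!l) k * ts!l $ r)"
  proof (rule eq_vecI)
    fix r assume "r < dim_vec (vec n (\<lambda>r. \<Sum>l\<in>{..<length ts}. fcoord hom es' (ks!l) k * ts!l $ r))"
    hence r: "r < n" by simp
    have "fcomb hom es' (\<lambda>k. if k \<le> length es then (U k *\<^sub>v v) $ r else 0)
        = fcomb hom es (\<lambda>k. (U k *\<^sub>v v) $ r)" unfolding es'_def by (rule fcomb_pad)
    also have "\<dots> = ?w $ r"
      using mult_vec_fcomb[OF P vc r, of es "fcoord hom es"] P_eq unfolding U_def by simp
    also have "\<dots> = (\<Sum>l<length ts. fcomb hom es' (fcoord hom es' (ks!l)) * hom (ts!l $ r))"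
      using kt(3) r fs(2) kt(1) unfolding es'_def by (auto simp: fcomb_fcoord intro!: sum.cong)
    also have "\<dots> = (\<Sum>l<length ts. fcomb hom es' (\<lambda>k. ts!l $ r * fcoord hom es' (ks!l) k))"
      by (simp add: fcomb_scale[symmetric] mult.commute)
    also have "\<dots> = fcomb hom es' (\<lambda>k. \<Sum>l<length ts. ts!l $ r * fcoord hom es' (ks!l) k)"
      by (rule fcomb_sum)
    finally have "(\<lambda>k. if k \<le> length es then (U k *\<^sub>v v) $ r else 0) k
        = (\<lambda>k. \<Sum>l<length ts. ts!l $ r * fcoord hom es' (ks!l) k) k"
      by (rule findep_unique[OF fs(1)[folded es'_def]]) (use k in \<open>simp add: es'_def\<close>)
    thus "(U k *\<^sub>v v) $ r = vec n (\<lambda>r. \<Sum>l\<in>{..<length ts}. fcoord hom es' (ks!l) k * ts!l $ r) $ r"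
      using k r by (simp add: mult.commute)
  qed (use P in \<open>simp add: U_def\<close>)
  thus ?thesis using kt(2) unfolding U_def by (auto intro!: subspace_sum_in[OF S])
qed

(* Consequently the specialization of P, an F-combination of the coordinate matrices,
   maps S into itself. *)
lemma specialize_stab:
  assumes es: "findep hom es" and P: "P \<in> carrier_mat n n"
    and spn: "\<forall>s\<in>elements_mat P. fspan hom es s"
    and rs: "length rs = length es" and S: "is_subspace n S"
    and st: "\<forall>v\<in>S. P *\<^sub>v map_vec hom v \<in> Kspan hom n S" and v: "v \<in> S"
  shows "map_mat (fspec hom es rs) P *\<^sub>v v \<in> S"
proof -
  interpret idh: field_hom id by (rule field_hom_id)
  define U where "U k = map_mat (\<lambda>s. fcoord hom es s k) P" for k
  have vc: "v \<in> carrier_vec n" using S v unfolding is_subspace_def by auto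
  have "map_mat (fspec hom es rs) P *\<^sub>v v
      = vec n (\<lambda>r. \<Sum>k\<in>{..length es}. (if k = 0 then 1 else rs!(k-1)) * (U k *\<^sub>v v) $ r)"
  proof (rule eq_vecI)
    fix r assume "r < dim_vec (vec n (\<lambda>r. \<Sum>k\<in>{..length es}. (if k = 0 then 1 else rs!(k-1)) * (U k *\<^sub>v v) $ r))"
    hence r: "r < n" by simp
    have "(map_mat (fspec hom es rs) P *\<^sub>v v) $ r
       = (map_mat (\<lambda>s. fcomb id rs (fcoord hom es s)) P *\<^sub>v map_vec id v) $ r"
      by (simp add: fspec_def map_vec_id_eq)
    also have "\<dots> = fcomb id rs (\<lambda>k. (U k *\<^sub>v v) $ r)"
      unfolding U_def by (rule idh.mult_vec_fcomb[OF P vc r])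
    also have "\<dots> = (\<Sum>k\<in>{..length es}. (if k = 0 then 1 else rs!(k-1)) * (U k *\<^sub>v v) $ r)"
      by (simp add: fcomb_id_sum rs)
    finally show "(map_mat (fspec hom es rs) P *\<^sub>v v) $ r
      = vec n (\<lambda>r. \<Sum>k\<in>{..length es}. (if k = 0 then 1 else rs!(k-1)) * (U k *\<^sub>v v) $ r) $ r"
      using r by simp
  qed (use P in simp)
  also have "\<dots> \<in> S"
    using coord_mat_stab[OF es P spn S st v] unfolding U_def by (intro subspace_sum_in[OF S]) auto
  finally show ?thesis .
qed

end

lemma mmul_length: "length (mmul x y) = min (length x) (length y)"
  unfolding mmul_def by simp

lemma mmul_nth: "i < length x \<Longrightarrow> i < length y \<Longrightarrow> mmul x y ! i = x!i * y!i"
  unfolding mmul_def by simp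

lemma mmul_Mset: assumes "x \<in> Mset ns" "y \<in> Mset ns" shows "mmul x y \<in> Mset ns"
proof (rule MsetI)
  fix i assume i: "i < length ns"
  with Mset_nth[OF assms(1) i] Mset_nth[OF assms(2) i]
  show "mmul x y ! i \<in> carrier_mat (ns!i) (ns!i)" using assms by (simp add: mmul_nth Mset_length)
qed (use assms in \<open>simp add: mmul_length Mset_length\<close>)

lemma Mset_eqI: "x \<in> Mset ns \<Longrightarrow> y \<in> Mset ns \<Longrightarrow> (\<And>i. i < length ns \<Longrightarrow> x!i = y!i) \<Longrightarrow> x = y"
  by (intro nth_equalityI) (auto simp: Mset_length)


lemma mmul_eq_iff:
  assumes "a \<in> Mset ns" "b \<in> Mset ns" "c \<in> Mset ns" "d \<in> Mset ns"
  shows "mmul a b = mmul c d \<longleftrightarrow> (\<forall>i<length ns. a!i * b!i = c!i * d!i)"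
proof
  assume eq: "mmul a b = mmul c d"
  show "\<forall>i<length ns. a!i * b!i = c!i * d!i"
  proof (intro allI impI)
    fix i assume "i < length ns"
    thus "a!i * b!i = c!i * d!i"
      using arg_cong[OF eq, of "\<lambda>z. z!i"] assms by (simp add: mmul_nth Mset_length)
  qed
next
  assume "\<forall>i<length ns. a!i * b!i = c!i * d!i"
  thus "mmul a b = mmul c d"
    using assms by (intro Mset_eqI[of "mmul a b" ns "mmul c d"] mmul_Mset) (auto simp: mmul_nth Mset_length)
qed

lemma mmul_assoc:
  assumes "x \<in> Mset ns" "y \<in> Mset ns" "z \<in> Mset ns"
  shows "mmul (mmul x y) z = mmul x (mmul y z)"
proof (rule Mset_eqI[of _ ns])
  fix i assume i: "i < length ns"
  with Mset_nth[OF assms(1) i] Mset_nth[OF assms(2) i] Mset_nth[OF assms(3) i]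
  show "mmul (mmul x y) z ! i = mmul x (mmul y z) ! i"
    using assms by (simp add: mmul_nth Mset_length mmul_length)
qed (use assms in \<open>auto intro!: mmul_Mset\<close>)

lemma mone_Mset: "mone ns \<in> Mset ns"
  unfolding mone_def by (intro MsetI) auto

lemma mone_nth: "i < length ns \<Longrightarrow> mone ns ! i = 1\<^sub>m (ns!i)"
  unfolding mone_def by simp

lemma mmul_mone_left: assumes "x \<in> Mset ns" shows "mmul (mone ns) x = x"
proof (rule Mset_eqI[of _ ns])
  fix i assume i: "i < length ns"
  with Mset_nth[OF assms i] show "mmul (mone ns) x ! i = x ! i"
    using assms by (simp add: mmul_nth Mset_length mone_nth mone_def)
qed (use assms mone_Mset mmul_Mset in auto)

lemma mmul_mone_right: assumes "x \<in> Mset ns" shows "mmul x (mone ns) = x"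
proof (rule Mset_eqI[of _ ns])
  fix i assume i: "i < length ns"
  with Mset_nth[OF assms i] show "mmul x (mone ns) ! i = x ! i"
    using assms by (simp add: mmul_nth Mset_length mone_nth mone_def)
qed (use assms mone_Mset mmul_Mset in auto)

lemma inverse_mat_ex:
  assumes "A \<in> carrier_mat n n" "det (A :: 'a::field mat) \<noteq> 0"
  shows "\<exists>B. B \<in> carrier_mat n n \<and> A * B = 1\<^sub>m n \<and> B * A = 1\<^sub>m n"
  using det_non_zero_imp_unit[OF assms, of undefined] unfolding Units_def ring_mat_def by auto

lemma invertible_mat_iff_det:
  assumes A: "A \<in> carrier_mat n n"
  shows "invertible_mat (A :: 'a::field mat) \<longleftrightarrow> det A \<noteq> 0"
proof
  assume "invertible_mat A"
  then obtain B where AB: "A * B = 1\<^sub>m n" and BA: "B * A = 1\<^sub>m (dim_row B)"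
    using A unfolding invertible_mat_def inverts_mat_def by auto
  have "B \<in> carrier_mat n n"
    using AB BA A by (metis carrier_matD(2) carrier_matI index_mult_mat(3) index_one_mat(3))
  from arg_cong[OF AB, of det] det_mult[OF A this] show "det A \<noteq> 0" by auto
next
  assume "det A \<noteq> 0"
  thus "invertible_mat A"
    using inverse_mat_ex[OF A] A unfolding invertible_mat_def inverts_mat_def by auto
qed

lemma Gset_iff: "x \<in> Gset ns \<longleftrightarrow> x \<in> Mset ns \<and> (\<forall>i<length ns. det (x!i) \<noteq> 0)"
  unfolding Gset_def using invertible_mat_iff_det Mset_nth by blast

lemma Gset_Mset: "x \<in> Gset ns \<Longrightarrow> x \<in> Mset ns"
  unfolding Gset_def by blast

lemma mone_Gset: "mone ns \<in> Gset ns"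
  unfolding Gset_iff using mone_Mset by (simp add: mone_nth)

lemma mmul_Gset: assumes "x \<in> Gset ns" "y \<in> Gset ns" shows "mmul x y \<in> Gset ns"
  unfolding Gset_iff
proof (intro conjI allI impI)
  show "mmul x y \<in> Mset ns" using assms Gset_Mset mmul_Mset by blast
  fix i assume i: "i < length ns"
  have "x!i \<in> carrier_mat (ns!i) (ns!i)" "y!i \<in> carrier_mat (ns!i) (ns!i)"
    using assms i Mset_nth Gset_Mset by blast+
  thus "det (mmul x y ! i) \<noteq> 0"
    using assms i by (auto simp: Gset_iff mmul_nth Mset_length det_mult)
qed

context field_hom begin

lemma map_Mset_iff: "map (map_mat hom) x \<in> Mset ns \<longleftrightarrow> x \<in> Mset ns"
  unfolding Mset_def by auto

lemma map_Gset_iff: "map (map_mat hom) x \<in> Gset ns \<longleftrightarrow> x \<in> Gset ns"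
  unfolding Gset_iff map_Mset_iff by (auto simp: Mset_length)

lemma map_mmul:
  assumes "x \<in> Mset ns" "y \<in> Mset ns"
  shows "map (map_mat hom) (mmul x y) = mmul (map (map_mat hom) x) (map (map_mat hom) y)"
proof (rule Mset_eqI[of _ ns])
  fix i assume i: "i < length ns"
  with Mset_nth[OF assms(1) i] Mset_nth[OF assms(2) i]
  show "map (map_mat hom) (mmul x y) ! i = mmul (map (map_mat hom) x) (map (map_mat hom) y) ! i"
    using assms by (simp add: mmul_nth Mset_length mmul_length mat_hom_mult)
qed (use assms in \<open>auto intro!: mmul_Mset simp: map_Mset_iff\<close>)

end

definition inherits_eqns :: "('a::field \<Rightarrow> 'b::field) \<Rightarrow> nat list \<Rightarrow> 'b mat list \<Rightarrow> 'a mat list \<Rightarrow> bool" where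
  "inherits_eqns h ns p p0 \<longleftrightarrow>
     (\<forall>l c. l \<in> Mset ns \<longrightarrow> lin_pair ns (map (map_mat h) l) p = h c \<longrightarrow> lin_pair ns l p0 = c)"

definition inherits_stab :: "('a::field \<Rightarrow> 'b::field) \<Rightarrow> nat list \<Rightarrow> 'b mat list \<Rightarrow> 'a mat list \<Rightarrow> bool" where
  "inherits_stab h ns p p0 \<longleftrightarrow> (\<forall>i<length ns. \<forall>S. is_subspace (ns!i) S
     \<longrightarrow> (\<forall>v\<in>S. p!i *\<^sub>v map_vec h v \<in> Kspan h (ns!i) S) \<longrightarrow> (\<forall>v\<in>S. p0!i *\<^sub>v v \<in> S))"

context field_hom begin

lemma specialize:
  assumes inf: "infinite (UNIV::'a set)"
    and p: "p \<in> Gset ns" and q: "q \<in> Mset ns" and x: "x \<in> Mset ns" and y: "y \<in> Mset ns"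
    and eq: "mmul p (map (map_mat hom) x) = mmul (map (map_mat hom) y) q"
  shows "\<exists>p0 q0. p0 \<in> Gset ns \<and> q0 \<in> Mset ns \<and> mmul p0 x = mmul y q0
    \<and> inherits_eqns hom ns p p0 \<and> inherits_eqns hom ns q q0 \<and> inherits_stab hom ns p p0"
proof -
  have pM: "p \<in> Mset ns" and dp: "\<forall>i\<in>{..<length ns}. det (p!i) \<noteq> 0" using p Gset_iff by auto
  define T where "T = (\<Union>i<length ns. elements_mat (p!i) \<union> elements_mat (q!i))"
  have "finite T" unfolding T_def elements_mat_def by auto
  from findep_extend[OF this findep_Nil] obtain es where
    es: "findep hom es" "\<forall>s\<in>T. fspan hom es s" by auto
  have spp: "\<forall>i<length ns. \<forall>s\<in>elements_mat (p!i). fspan hom es s"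
    and spq: "\<forall>i<length ns. \<forall>s\<in>elements_mat (q!i). fspan hom es s"
    using es(2) unfolding T_def by auto
  obtain rs where rs: "length rs = length es"
    "\<forall>i\<in>{..<length ns}. det (map_mat (fspec hom es rs) (p!i)) \<noteq> 0"
    using specialize_det[OF inf _ _ dp, of es] spp by auto
  define p0 where "p0 = map (map_mat (fspec hom es rs)) p"
  define q0 where "q0 = map (map_mat (fspec hom es rs)) q"
  have p0_nth: "i < length ns \<Longrightarrow> p0!i = map_mat (fspec hom es rs) (p!i)"
    and q0_nth: "i < length ns \<Longrightarrow> q0!i = map_mat (fspec hom es rs) (q!i)" for i
    using pM q unfolding p0_def q0_def by (auto simp: Mset_length)
  have p0M: "p0 \<in> Mset ns" and q0M: "q0 \<in> Mset ns"
    using pM q unfolding p0_def q0_def Mset_def by auto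
  have "p0 \<in> Gset ns" unfolding Gset_iff using p0M rs(2) by (simp add: p0_nth)
  moreover have "mmul p0 x = mmul y q0"
    unfolding mmul_eq_iff[OF p0M x y q0M]
  proof (intro allI impI)
    fix i assume i: "i < length ns"
    have "p!i * map_mat hom (x!i) = map_mat hom (y!i) * q!i"
      using eq i pM q x y by (simp add: mmul_eq_iff map_Mset_iff Mset_length)
    moreover have "\<forall>s\<in>elements_mat (p!i) \<union> elements_mat (q!i). fspan hom es s"
      using spp spq i by blast
    ultimately show "p0!i * x!i = y!i * q0!i"
      using specialize_mult[OF es(1) Mset_nth[OF pM i] Mset_nth[OF q i] Mset_nth[OF x i]
          Mset_nth[OF y i] _ rs(1)] i
      by (simp add: p0_nth q0_nth)
  qed
  moreover have "inherits_eqns hom ns p p0" "inherits_eqns hom ns q q0"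
    unfolding inherits_eqns_def p0_def q0_def
    using specialize_lin_pair[OF es(1) pM spp _ _ rs(1)] specialize_lin_pair[OF es(1) q spq _ _ rs(1)]
    by blast+
  moreover have "inherits_stab hom ns p p0"
    unfolding inherits_stab_def
    using specialize_stab[OF es(1) Mset_nth[OF pM] _ rs(1)] spp p0_nth by auto
  ultimately show ?thesis using q0M by blast
qed

end

context field_hom begin

lemma lin_pair_map:
  assumes "l \<in> Mset ns" "x \<in> Mset ns"
  shows "lin_pair ns (map (map_mat hom) l) (map (map_mat hom) x) = hom (lin_pair ns l x)"
  unfolding lin_pair_def hom_sum hom_mult
proof (intro sum.cong refl)
  fix i r c assume i: "i \<in> {..<length ns}" and r: "r \<in> {..<ns!i}" and c: "c \<in> {..<ns!i}"
  have "l!i \<in> carrier_mat (ns!i) (ns!i)" "x!i \<in> carrier_mat (ns!i) (ns!i)"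
    using Mset_nth[OF assms(1)] Mset_nth[OF assms(2)] i by auto
  thus "map (map_mat hom) l ! i $$ (r, c) * map (map_mat hom) x ! i $$ (r, c)
      = hom (l ! i $$ (r, c)) * hom (x ! i $$ (r, c))"
    using r c i Mset_length[OF assms(1)] Mset_length[OF assms(2)] by simp
qed

lemma subgrp_pts_map_iff:
  assumes E: "lin_eqns ns E"
  shows "map (map_mat hom) x \<in> subgrp_pts hom ns E \<longleftrightarrow> x \<in> subgrp_pts id ns E"
proof (cases "x \<in> Mset ns")
  case True
  have "lin_pair ns (map (map_mat hom) l) (map (map_mat hom) x) = hom c
      \<longleftrightarrow> lin_pair ns (map (map_mat id) l) x = id c" if "(l,c) \<in> E" for l c
    using E True that unfolding lin_eqns_def by (auto simp: lin_pair_map map_mat_id_fun)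
  hence "map (map_mat hom) x \<in> affine_locus hom ns E \<longleftrightarrow> x \<in> affine_locus id ns E"
    unfolding affine_locus_def using True map_Mset_iff by auto
  thus ?thesis unfolding subgrp_pts_def using map_Gset_iff by blast
next
  case False
  thus ?thesis unfolding subgrp_pts_def affine_locus_def using map_Mset_iff by blast
qed

lemma subgrp_pts_mmul:
  assumes E: "lin_eqns ns E" and G: "is_subgroup ns (subgrp_pts hom ns E)"
    and u: "u \<in> subgrp_pts id ns E" and w: "w \<in> subgrp_pts id ns E"
  shows "mmul u w \<in> subgrp_pts id ns E"
proof -
  have uM: "u \<in> Mset ns" "w \<in> Mset ns" using u w unfolding subgrp_pts_def Gset_def by auto
  have "map (map_mat hom) u \<in> subgrp_pts hom ns E" "map (map_mat hom) w \<in> subgrp_pts hom ns E"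
    using u w subgrp_pts_map_iff[OF E] by auto
  hence "mmul (map (map_mat hom) u) (map (map_mat hom) w) \<in> subgrp_pts hom ns E"
    using G unfolding is_subgroup_def by auto
  thus ?thesis using subgrp_pts_map_iff[OF E] map_mmul[OF uM] by metis
qed

(* The inverse of an F-point u is an F-matrix, and its image is the inverse of the image of u
   in the subgroup of K-points. *)
lemma subgrp_pts_inverse:
  assumes E: "lin_eqns ns E" and G: "is_subgroup ns (subgrp_pts hom ns E)"
    and u: "u \<in> subgrp_pts id ns E"
  shows "\<exists>w\<in>subgrp_pts id ns E. mmul u w = mone ns"
proof -
  have uM: "u \<in> Mset ns" and ud: "\<forall>i<length ns. det (u!i) \<noteq> 0"
    using u Gset_iff[of u ns] unfolding subgrp_pts_def by auto
  have "\<forall>i<length ns. \<exists>B. B \<in> carrier_mat (ns!i) (ns!i) \<and> u!i * B = 1\<^sub>m (ns!i) \<and> B * u!i = 1\<^sub>m (ns!i)"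
    using inverse_mat_ex Mset_nth[OF uM] ud by blast
  then obtain f where f: "\<And>i. i < length ns \<Longrightarrow>
      f i \<in> carrier_mat (ns!i) (ns!i) \<and> u!i * f i = 1\<^sub>m (ns!i) \<and> f i * u!i = 1\<^sub>m (ns!i)"
    by metis
  define w where "w = map f [0..<length ns]"
  have wM: "w \<in> Mset ns" unfolding w_def using f by (intro MsetI) auto
  have uw: "mmul u w = mone ns"
    by (rule Mset_eqI[of _ ns]) (use f uM wM in \<open>auto intro!: mmul_Mset mone_Mset simp: mmul_nth Mset_length mone_nth w_def\<close>)
  have "map (map_mat hom) u \<in> subgrp_pts hom ns E" using u subgrp_pts_map_iff[OF E] by auto
  then obtain z where z: "z \<in> subgrp_pts hom ns E" "mmul (map (map_mat hom) u) z = mone ns"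
    using G unfolding is_subgroup_def by auto
  have zM: "z \<in> Mset ns" using z unfolding subgrp_pts_def Gset_def by auto
  have "z = map (map_mat hom) w"
  proof (rule Mset_eqI[OF zM map_Mset_iff[THEN iffD2, OF wM]])
    fix i assume i: "i < length ns"
    have c: "u!i \<in> carrier_mat (ns!i) (ns!i)" "w!i \<in> carrier_mat (ns!i) (ns!i)" "z!i \<in> carrier_mat (ns!i) (ns!i)"
      using uM wM zM i Mset_nth by auto
    have zi: "map_mat hom (u!i) * z!i = 1\<^sub>m (ns!i)"
      using arg_cong[OF z(2), of "\<lambda>l. l!i"] i uM zM by (simp add: mmul_nth Mset_length mone_nth)
    have "w!i * u!i = 1\<^sub>m (ns!i)" using f i unfolding w_def by simp
    hence wi: "map_mat hom (w!i) * map_mat hom (u!i) = 1\<^sub>m (ns!i)"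
      using mat_hom_mult[OF c(2) c(1)] mat_hom_one by simp
    have "z!i = (map_mat hom (w!i) * map_mat hom (u!i)) * z!i" using wi c by simp
    also have "\<dots> = map_mat hom (w!i) * (map_mat hom (u!i) * z!i)"
      using c by (intro assoc_mult_mat) auto
    also have "\<dots> = map_mat hom (w!i)" using zi c by simp
    finally show "z!i = map (map_mat hom) w ! i" using i wM by (simp add: Mset_length)
  qed
  hence "w \<in> subgrp_pts id ns E" using z(1) subgrp_pts_map_iff[OF E] by simp
  thus ?thesis using uw by blast
qed

lemma subgrp_pts_inherit:
  assumes E: "lin_eqns ns E" and a: "a \<in> subgrp_pts hom ns E"
    and p0: "p0 \<in> Gset ns" and inh: "inherits_eqns hom ns a p0"
  shows "p0 \<in> subgrp_pts id ns E"
proof -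
  have "lin_pair ns (map (map_mat id) l) p0 = id c" if lc: "(l,c) \<in> E" for l c
  proof -
    have "l \<in> Mset ns" using E lc unfolding lin_eqns_def by auto
    moreover have "lin_pair ns (map (map_mat hom) l) a = hom c"
      using a lc unfolding subgrp_pts_def affine_locus_def by auto
    ultimately show ?thesis using inh unfolding inherits_eqns_def by (simp add: map_mat_id_fun)
  qed
  thus ?thesis using p0 Gset_Mset unfolding subgrp_pts_def affine_locus_def by auto
qed

(* Since p X = Y h^-1 is linear in (p, h^-1), specialization gives p0 x = y q0 where q0
   inherits the equations of E; q0 is invertible because p0, x and y are, so q0 and its
   inverse q are F-points of E. *)
lemma double_coset_descent:
  assumes inf: "infinite (UNIV::'a set)"
    and E: "lin_eqns ns E" and GE: "is_subgroup ns (subgrp_pts hom ns E)"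
    and x: "x \<in> Gset ns" and y: "y \<in> Gset ns"
    and p: "p \<in> Gset ns" and h: "h \<in> subgrp_pts hom ns E"
    and e: "mmul (mmul p (map (map_mat hom) x)) h = map (map_mat hom) y"
  shows "\<exists>p0 q. p0 \<in> Gset ns \<and> q \<in> subgrp_pts id ns E \<and> mmul (mmul p0 x) q = y
           \<and> inherits_eqns hom ns p p0 \<and> inherits_stab hom ns p p0"
proof -
  have xM: "x \<in> Mset ns" and yM: "y \<in> Mset ns" and pM: "p \<in> Mset ns" and hM: "h \<in> Mset ns"
    using x y p h Gset_Mset unfolding subgrp_pts_def by auto
  obtain h' where h': "h' \<in> subgrp_pts hom ns E" "mmul h h' = mone ns"
    using GE h unfolding is_subgroup_def by auto
  have h'M: "h' \<in> Mset ns" using h' Gset_Mset unfolding subgrp_pts_def by auto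
  let ?X = "map (map_mat hom) x" and ?Y = "map (map_mat hom) y"
  have XM: "?X \<in> Mset ns" and YM: "?Y \<in> Mset ns" using xM yM map_Mset_iff by auto
  have "mmul p ?X = mmul (mmul p ?X) (mmul h h')"
    using h'(2) mmul_mone_right[OF mmul_Mset[OF pM XM]] by simp
  also have "\<dots> = mmul ?Y h'" using e mmul_assoc[OF mmul_Mset[OF pM XM] hM h'M] by simp
  finally obtain p0 q0 where pq: "p0 \<in> Gset ns" "q0 \<in> Mset ns" "mmul p0 x = mmul y q0"
      "inherits_eqns hom ns p p0" "inherits_eqns hom ns h' q0" "inherits_stab hom ns p p0"
    using specialize[OF inf p h'M xM yM] by blast
  have p0M: "p0 \<in> Mset ns" using pq(1) Gset_Mset by auto
  have "q0 \<in> Gset ns" unfolding Gset_iff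
  proof (intro conjI allI impI pq(2))
    fix i assume i: "i < length ns"
    have "p0!i * x!i = y!i * q0!i" using pq(3) i mmul_eq_iff[OF p0M xM yM pq(2)] by blast
    hence "det (p0!i) * det (x!i) = det (y!i) * det (q0!i)"
      using det_mult Mset_nth[OF p0M i] Mset_nth[OF xM i] Mset_nth[OF yM i] Mset_nth[OF pq(2) i]
      by metis
    moreover have "det (p0!i) \<noteq> 0" "det (x!i) \<noteq> 0" using pq(1) x i unfolding Gset_iff by auto
    ultimately show "det (q0!i) \<noteq> 0" by auto
  qed
  hence "q0 \<in> subgrp_pts id ns E" by (rule subgrp_pts_inherit[OF E h'(1) _ pq(5)])
  then obtain q where q: "q \<in> subgrp_pts id ns E" "mmul q0 q = mone ns"
    using subgrp_pts_inverse[OF E GE] by blast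
  have qM: "q \<in> Mset ns" using q Gset_Mset unfolding subgrp_pts_def by auto
  have "mmul (mmul p0 x) q = mmul y (mmul q0 q)" using pq(3) mmul_assoc[OF yM pq(2) qM] by simp
  also have "\<dots> = y" using q(2) mmul_mone_right[OF yM] by simp
  finally show ?thesis using pq(1,4,6) q(1) by blast
qed

lemma double_coset_rational:
  assumes inf: "infinite (UNIV::'a set)"
    and EA: "lin_eqns ns EA" and EB: "lin_eqns ns EB"
    and GB: "is_subgroup ns (subgrp_pts hom ns EB)"
    and x: "x \<in> Gset ns" and y: "y \<in> Gset ns"
    and a: "a \<in> subgrp_pts hom ns EA" and b: "b \<in> subgrp_pts hom ns EB"
    and e: "mmul (mmul a (map (map_mat hom) x)) b = map (map_mat hom) y"
  shows "\<exists>a\<in>subgrp_pts id ns EA. \<exists>b\<in>subgrp_pts id ns EB. mmul (mmul a x) b = y"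
proof -
  have "a \<in> Gset ns" using a unfolding subgrp_pts_def by auto
  then obtain a0 b0 where ab: "a0 \<in> Gset ns" "b0 \<in> subgrp_pts id ns EB"
      "mmul (mmul a0 x) b0 = y" "inherits_eqns hom ns a a0"
    using double_coset_descent[OF inf EB GB x y _ b e] by blast
  have "a0 \<in> subgrp_pts id ns EA" by (rule subgrp_pts_inherit[OF EA a ab(1,4)])
  thus ?thesis using ab(2,3) by blast
qed

end

definition is_flag :: "nat list \<Rightarrow> (nat \<Rightarrow> 'a::field vec set set) \<Rightarrow> bool" where
  "is_flag ns Fl \<longleftrightarrow>
     (\<forall>i<length ns. (\<forall>S\<in>Fl i. is_subspace (ns!i) S) \<and> (\<forall>S\<in>Fl i. \<forall>T\<in>Fl i. S \<subseteq> T \<or> T \<subseteq> S))"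

definition flag_stab :: "nat list \<Rightarrow> (nat \<Rightarrow> 'a::field vec set set) \<Rightarrow> 'a mat list set" where
  "flag_stab ns Fl = {g \<in> Gset ns. \<forall>i<length ns. \<forall>S\<in>Fl i. \<forall>v\<in>S. (g!i) *\<^sub>v v \<in> S}"

definition dcoset :: "'a::field mat list set \<Rightarrow> 'a mat list set \<Rightarrow> 'a mat list \<Rightarrow> 'a mat list set" where
  "dcoset P H g = {mmul (mmul p g) h | p h. p \<in> P \<and> h \<in> H}"

lemma dcoset_self:
  assumes "mone ns \<in> P" "mone ns \<in> H" "g \<in> Mset ns"
  shows "g \<in> dcoset P H g"
  unfolding dcoset_def using assms
  by (intro CollectI exI[of _ "mone ns"]) (simp add: mmul_mone_left mmul_mone_right)

lemma dcoset_subset: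
  assumes P: "P \<subseteq> Mset ns" "\<And>a b. a \<in> P \<Longrightarrow> b \<in> P \<Longrightarrow> mmul a b \<in> P"
    and H: "H \<subseteq> Mset ns" "\<And>a b. a \<in> H \<Longrightarrow> b \<in> H \<Longrightarrow> mmul a b \<in> H"
    and p0: "p0 \<in> P" and q: "q \<in> H" and g1: "g1 \<in> Mset ns" and g2: "g2 = mmul (mmul p0 g1) q"
  shows "dcoset P H g2 \<subseteq> dcoset P H g1"
proof
  fix z assume "z \<in> dcoset P H g2"
  then obtain p h where z: "p \<in> P" "h \<in> H" "z = mmul (mmul p g2) h"
    unfolding dcoset_def by auto
  have M: "p \<in> Mset ns" "p0 \<in> Mset ns" "q \<in> Mset ns" "h \<in> Mset ns"
    using z(1,2) p0 q P(1) H(1) by auto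
  have "z = mmul (mmul (mmul p p0) g1) (mmul q h)"
    using M g1 unfolding z(3) g2 by (simp add: mmul_assoc mmul_Mset)
  moreover have "mmul p p0 \<in> P" "mmul q h \<in> H" using P(2) H(2) z(1,2) p0 q by auto
  ultimately show "z \<in> dcoset P H g1"
    unfolding dcoset_def by (intro CollectI exI[of _ "mmul p p0"] exI[of _ "mmul q h"]) simp
qed

lemma parabolic_iff: "parabolic ns P \<longleftrightarrow> (\<exists>Fl. is_flag ns Fl \<and> P = flag_stab ns Fl)"
  unfolding parabolic_def is_flag_def flag_stab_def by blast

lemma double_cosets_eq: "double_cosets ns P H = dcoset P H ` Gset ns"
  unfolding double_cosets_def dcoset_def by simp

lemma flag_subspace: "is_flag ns Fl \<Longrightarrow> i < length ns \<Longrightarrow> S \<in> Fl i \<Longrightarrow> is_subspace (ns!i) S"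
  unfolding is_flag_def by blast

lemma flag_carrier: "is_flag ns Fl \<Longrightarrow> i < length ns \<Longrightarrow> S \<in> Fl i \<Longrightarrow> S \<subseteq> carrier_vec (ns!i)"
  using flag_subspace unfolding is_subspace_def by blast

lemma mone_flag_stab: assumes "is_flag ns Fl" shows "mone ns \<in> flag_stab ns Fl"
  unfolding flag_stab_def
proof (intro CollectI conjI mone_Gset allI impI ballI)
  fix i S v assume i: "i < length ns" and "S \<in> Fl i" and v: "v \<in> S"
  hence "v \<in> carrier_vec (ns!i)" using flag_carrier[OF assms] by blast
  thus "mone ns ! i *\<^sub>v v \<in> S" using i v by (simp add: mone_nth)
qed

lemma mmul_flag_stab:
  assumes Fl: "is_flag ns Fl" and g: "g \<in> flag_stab ns Fl" and h: "h \<in> flag_stab ns Fl"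
  shows "mmul g h \<in> flag_stab ns Fl"
  unfolding flag_stab_def
proof (intro CollectI conjI allI impI ballI)
  have gG: "g \<in> Gset ns" and hG: "h \<in> Gset ns" using g h unfolding flag_stab_def by auto
  thus "mmul g h \<in> Gset ns" by (rule mmul_Gset)
  fix i S v assume i: "i < length ns" and S: "S \<in> Fl i" and v: "v \<in> S"
  have "v \<in> carrier_vec (ns!i)" using flag_carrier[OF Fl i S] v by auto
  hence "(mmul g h ! i) *\<^sub>v v = g!i *\<^sub>v (h!i *\<^sub>v v)"
    using i Mset_nth[OF Gset_Mset[OF gG] i] Mset_nth[OF Gset_Mset[OF hG] i]
      Mset_length[OF Gset_Mset[OF gG]] Mset_length[OF Gset_Mset[OF hG]]
    by (simp add: mmul_nth assoc_mult_mat_vec)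
  thus "(mmul g h ! i) *\<^sub>v v \<in> S" using g h i S v unfolding flag_stab_def by simp
qed

lemma finite_image_factor:
  assumes fin: "finite (g ` A)" and fib: "\<And>x y. x \<in> A \<Longrightarrow> y \<in> A \<Longrightarrow> g x = g y \<Longrightarrow> f x = f y"
  shows "finite (f ` A)"
proof -
  have "f ` A \<subseteq> (\<lambda>b. f (SOME x. x \<in> A \<and> g x = b)) ` g ` A"
  proof
    fix z assume "z \<in> f ` A"
    then obtain x where x: "x \<in> A" "z = f x" by blast
    hence "\<exists>y. y \<in> A \<and> g y = g x" by blast
    hence "(SOME y. y \<in> A \<and> g y = g x) \<in> A \<and> g (SOME y. y \<in> A \<and> g y = g x) = g x" by (rule someI_ex)
    hence "f (SOME y. y \<in> A \<and> g y = g x) = z" using fib x by metis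
    thus "z \<in> (\<lambda>b. f (SOME x. x \<in> A \<and> g x = b)) ` g ` A" using x(1) by blast
  qed
  thus ?thesis using fin finite_subset by blast
qed

context field_hom begin

lemma Kspan_flag:
  assumes Fl: "is_flag ns Fl"
  shows "is_flag ns (\<lambda>i. Kspan hom (ns!i) ` Fl i)"
  unfolding is_flag_def
proof (intro allI impI conjI ballI)
  fix i S assume "S \<in> Kspan hom (ns!i) ` Fl i"
  thus "is_subspace (ns!i) S" using Kspan_subspace by auto
next
  fix i S T assume i: "i < length ns"
    and "S \<in> Kspan hom (ns!i) ` Fl i" "T \<in> Kspan hom (ns!i) ` Fl i"
  then obtain S0 T0 where ST: "S0 \<in> Fl i" "T0 \<in> Fl i" "S = Kspan hom (ns!i) S0" "T = Kspan hom (ns!i) T0"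
    by blast
  have "S0 \<subseteq> T0 \<or> T0 \<subseteq> S0" using Fl i ST(1,2) unfolding is_flag_def by blast
  thus "S \<subseteq> T \<or> T \<subseteq> S" using Kspan_mono ST(3,4) by blast
qed

lemma flag_stab_inherit:
  assumes Fl: "is_flag ns Fl" and p: "p \<in> flag_stab ns (\<lambda>i. Kspan hom (ns!i) ` Fl i)"
    and p0: "p0 \<in> Gset ns" and inh: "inherits_stab hom ns p p0"
  shows "p0 \<in> flag_stab ns Fl"
  unfolding flag_stab_def
proof (intro CollectI conjI allI impI ballI p0)
  fix i S v assume i: "i < length ns" and S: "S \<in> Fl i" and v: "v \<in> S"
  have Ssub: "is_subspace (ns!i) S" by (rule flag_subspace[OF Fl i S])
  have "p!i *\<^sub>v map_vec hom w \<in> Kspan hom (ns!i) S" if "w \<in> S" for w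
  proof -
    have "map_vec hom w \<in> Kspan hom (ns!i) S"
      using map_vec_in_Kspan that Ssub unfolding is_subspace_def by blast
    thus ?thesis using p i S unfolding flag_stab_def by blast
  qed
  thus "(p0!i) *\<^sub>v v \<in> S" using inh i Ssub v unfolding inherits_stab_def by blast
qed

(* F-points of G in one P(K) \ G(K) / A(K) double coset, for P the stabilizer of an F-flag,
   lie in one P(F) \ G(F) / A(F) double coset: a specialization of an element p of P(K)
   stabilizes the F-flag, since p stabilizes its K-span. *)
lemma dcoset_descent:
  assumes inf: "infinite (UNIV::'a set)"
    and EA: "lin_eqns ns EA" and GA: "is_subgroup ns (subgrp_pts hom ns EA)"
    and Fl: "is_flag ns Fl" and g1: "g1 \<in> Gset ns" and g2: "g2 \<in> Gset ns"
    and same: "dcoset (flag_stab ns (\<lambda>i. Kspan hom (ns!i) ` Fl i)) (subgrp_pts hom ns EA) (map (map_mat hom) g1)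
             = dcoset (flag_stab ns (\<lambda>i. Kspan hom (ns!i) ` Fl i)) (subgrp_pts hom ns EA) (map (map_mat hom) g2)"
  shows "dcoset (flag_stab ns Fl) (subgrp_pts id ns EA) g2 \<subseteq> dcoset (flag_stab ns Fl) (subgrp_pts id ns EA) g1"
proof -
  define PK where "PK = flag_stab ns (\<lambda>i. Kspan hom (ns!i) ` Fl i)"
  have "mone ns \<in> PK" unfolding PK_def by (rule mone_flag_stab[OF Kspan_flag[OF Fl]])
  moreover have "mone ns \<in> subgrp_pts hom ns EA" using GA unfolding is_subgroup_def by blast
  moreover have "map (map_mat hom) g2 \<in> Mset ns" using g2 map_Gset_iff Gset_Mset by blast
  ultimately have "map (map_mat hom) g2 \<in> dcoset PK (subgrp_pts hom ns EA) (map (map_mat hom) g2)"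
    by (rule dcoset_self)
  hence "map (map_mat hom) g2 \<in> dcoset PK (subgrp_pts hom ns EA) (map (map_mat hom) g1)"
    using same unfolding PK_def by simp
  hence "\<exists>p h. map (map_mat hom) g2 = mmul (mmul p (map (map_mat hom) g1)) h
      \<and> p \<in> PK \<and> h \<in> subgrp_pts hom ns EA"
    unfolding dcoset_def by simp
  then obtain p h where ph: "p \<in> PK" "h \<in> subgrp_pts hom ns EA"
      "map (map_mat hom) g2 = mmul (mmul p (map (map_mat hom) g1)) h"
    by blast
  have pG: "p \<in> Gset ns" using ph(1) unfolding PK_def flag_stab_def by auto
  obtain p0 q where pq: "p0 \<in> Gset ns" "q \<in> subgrp_pts id ns EA" "mmul (mmul p0 g1) q = g2"
      "inherits_stab hom ns p p0"
    using double_coset_descent[OF inf EA GA g1 g2 pG ph(2) ph(3)[symmetric]] by blast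
  have p0P: "p0 \<in> flag_stab ns Fl" using flag_stab_inherit[OF Fl ph(1)[unfolded PK_def] pq(1,4)] .
  show ?thesis
  proof (rule dcoset_subset[OF _ _ _ _ p0P pq(2) Gset_Mset[OF g1] pq(3)[symmetric]])
    show "flag_stab ns Fl \<subseteq> Mset ns" "subgrp_pts id ns EA \<subseteq> Mset ns"
      unfolding flag_stab_def subgrp_pts_def using Gset_Mset by auto
  qed (use mmul_flag_stab[OF Fl] subgrp_pts_mmul[OF EA GA] in auto)
qed

(* Part (2) of the proposition: the F-double cosets are at most as many as the K-double
   cosets, via g \<mapsto> P(K) g A(K). *)
lemma spherical_descent:
  assumes inf: "infinite (UNIV::'a set)"
    and EA: "lin_eqns ns EA" and GA: "is_subgroup ns (subgrp_pts hom ns EA)"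
    and sph: "spherical_fin ns (subgrp_pts hom ns EA)"
  shows "spherical_fin ns (subgrp_pts id ns EA)"
  unfolding spherical_fin_def
proof (intro allI impI)
  fix P :: "'a mat list set" assume "parabolic ns P"
  then obtain Fl where Fl: "is_flag ns Fl" and P: "P = flag_stab ns Fl"
    unfolding parabolic_iff by blast
  define DK where "DK = dcoset (flag_stab ns (\<lambda>i. Kspan hom (ns!i) ` Fl i)) (subgrp_pts hom ns EA)"
  have "parabolic ns (flag_stab ns (\<lambda>i. Kspan hom (ns!i) ` Fl i))"
    unfolding parabolic_iff using Kspan_flag[OF Fl] by blast
  hence "finite (DK ` Gset ns)" using sph unfolding spherical_fin_def double_cosets_eq DK_def by blast
  moreover have "(\<lambda>g. DK (map (map_mat hom) g)) ` Gset ns \<subseteq> DK ` Gset ns"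
    using map_Gset_iff by auto
  ultimately have "finite ((\<lambda>g. DK (map (map_mat hom) g)) ` Gset ns)" by (rule finite_subset[rotated])
  moreover have "dcoset P (subgrp_pts id ns EA) g1 = dcoset P (subgrp_pts id ns EA) g2"
    if "g1 \<in> Gset ns" "g2 \<in> Gset ns" "DK (map (map_mat hom) g1) = DK (map (map_mat hom) g2)" for g1 g2
  proof (rule equalityI)
    show "dcoset P (subgrp_pts id ns EA) g1 \<subseteq> dcoset P (subgrp_pts id ns EA) g2"
      using dcoset_descent[OF inf EA GA Fl that(2,1)] that(3) unfolding P DK_def by simp
    show "dcoset P (subgrp_pts id ns EA) g2 \<subseteq> dcoset P (subgrp_pts id ns EA) g1"
      using dcoset_descent[OF inf EA GA Fl that(1,2)] that(3) unfolding P DK_def by simp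
  qed
  ultimately have "finite (dcoset P (subgrp_pts id ns EA) ` Gset ns)" by (rule finite_image_factor)
  thus "finite (double_cosets ns P (subgrp_pts id ns EA))" unfolding double_cosets_eq .
qed

end

(* The only consequence of the algebraic-closure hypothesis that the proof needs. *)
lemma alg_closure_field_hom: "is_alg_closure \<phi> \<Longrightarrow> field_hom \<phi>"
  unfolding is_alg_closure_def by unfold_locales auto

theorem proposition4p3:
  fixes \<phi> :: "'a::field \<Rightarrow> 'b::field" and ns :: "nat list" and EA EB :: "('a mat list \<times> 'a) set"
  assumes "infinite (UNIV :: 'a set)"
    and "is_alg_closure \<phi>"
    and "lin_eqns ns EA" and "lin_eqns ns EB"
    and "is_subgroup ns (subgrp_pts \<phi> ns EA)"
    and "is_subgroup ns (subgrp_pts \<phi> ns EB)"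
  shows "(\<forall>x\<in>Gset ns. \<forall>y\<in>Gset ns.
            (\<exists>a\<in>subgrp_pts \<phi> ns EA. \<exists>b\<in>subgrp_pts \<phi> ns EB.
                mmul (mmul a (map (map_mat \<phi>) x)) b = map (map_mat \<phi>) y)
            \<longrightarrow> (\<exists>a\<in>subgrp_pts id ns EA. \<exists>b\<in>subgrp_pts id ns EB. mmul (mmul a x) b = y))
       \<and> (spherical_fin ns (subgrp_pts \<phi> ns EA) \<longrightarrow> spherical_fin ns (subgrp_pts id ns EA))"
proof -
  interpret field_hom \<phi> by (rule alg_closure_field_hom[OF assms(2)])
  show ?thesis
  proof (intro conjI ballI impI)
    fix x y assume "x \<in> Gset ns" "y \<in> Gset ns"
      and "\<exists>a\<in>subgrp_pts \<phi> ns EA. \<exists>b\<in>subgrp_pts \<phi> ns EB.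
             mmul (mmul a (map (map_mat \<phi>) x)) b = map (map_mat \<phi>) y"
    thus "\<exists>a\<in>subgrp_pts id ns EA. \<exists>b\<in>subgrp_pts id ns EB. mmul (mmul a x) b = y"
      using double_coset_rational[OF assms(1,3,4,6)] by blast
  next
    assume "spherical_fin ns (subgrp_pts \<phi> ns EA)"
    thus "spherical_fin ns (subgrp_pts id ns EA)" by (rule spherical_descent[OF assms(1,3,5)])
  qed
qed

end
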